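(* For every integer $n\ge3$, $c_n\ge(\sqrt3/2)^{\varphi(n)}$ (with equality for $n=3$ and $n=6$).
   Context: For $n\ge1$, $\phi_n(X)$ denotes the $n$-th cyclotomic polynomial, of degree $\varphi(n)$ (Euler's totient). For $n\ge3$, $c_n=\inf_{t\in\mathbb R}\phi_n(t)$. *)

theory Defs
  imports "HOL-Analysis.Analysis" "HOL-Number_Theory.Number_Theory"
begin

definition cyclotomic :: "nat \<Rightarrow> complex poly" where
  "cyclotomic n = (\<Prod>k\<in>{k\<in>{1..n}. coprime k n}. [:- cis (2 * pi * real k / real n), 1:])"

text \<open>c_n = inf over real t of phi_n(t); phi_n has real (indeed integer) coefficients,
  so its value at a real point is real and we take the real part.\<close>
definition cyc_inf :: "nat \<Rightarrow> real" where
  "cyc_inf n = (INF t::real. Re (poly (cyclotomic n) (complex_of_real t)))"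

end

theory Submission
  imports Defs
begin

text \<open>
  Write Phi_n for the n-th cyclotomic polynomial and r = sqrt 3 / 2. For an odd prime power,
  Phi_(p^a)(t) = Phi_p(t^(p^(a-1))) is a geometric sum and lies in [1/2, p] when |t| <= 1.
  For a prime q not dividing m, Phi_m(t^q) = Phi_(mq)(t) Phi_m(t). Splitting off the largest
  prime factor of an odd n that is not a prime power therefore writes Phi_n(t) as a quotient
  of two values of Phi_m on [-1, 1], and induction traps Phi_n(t) between r^phi(n) and its
  reciprocal there: the totient grows fast enough to absorb the factor lost at each step.
  Even n reduce to odd ones through Phi_(2m)(t) = Phi_m(-t) for odd m > 1 and
  Phi_(2m)(t) = Phi_m(t^2) for even m, and |t| > 1 reduces to the unit interval through
  t^phi(n) Phi_n(1/t) = Phi_n(t). The bound is attained for n = 3 at t = -1/2 and for n = 6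
  at t = 1/2.
\<close>

lemma monic_poly_eq_prod_roots:
  fixes p :: "'a::idom poly" and r :: "nat \<Rightarrow> 'a"
  assumes deg: "degree p = n" and monic: "lead_coeff p = 1" and inj: "inj_on r {..<n}"
    and roots: "\<And>j. j < n \<Longrightarrow> poly p (r j) = 0"
  shows "p = (\<Prod>j<n. [:- r j, 1:])"
proof (rule ccontr)
  define R where "R = (\<Prod>j<n. [:- r j, 1:])"
  assume "p \<noteq> R"
  hence D: "p - R \<noteq> 0" by simp
  have "degree R = n"
    by (simp add: R_def degree_prod_sum_eq)
  moreover have "lead_coeff R = 1"
    by (simp add: R_def lead_coeff_prod)
  ultimately have "degree (p - R) \<le> n" "Polynomial.coeff (p - R) n = 0"
    using deg monic by (auto intro: degree_diff_le)
  hence small: "degree (p - R) < n"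
    using D by (metis le_neq_implies_less leading_coeff_0_iff)
  have "r ` {..<n} \<subseteq> {x. poly (p - R) x = 0}"
    using roots by (auto simp: R_def poly_prod)
  hence "card (r ` {..<n}) \<le> card {x. poly (p - R) x = 0}"
    using poly_roots_finite[OF D] by (rule card_mono[rotated])
  also have "\<dots> \<le> degree (p - R)"
    using D by (rule card_poly_roots_bound)
  finally show False
    using small inj by (simp add: card_image)
qed

lemma poly_eq_if_mult_poly_eq:
  fixes p f g :: "'a::{idom, ring_char_0} poly"
  assumes "p \<noteq> 0" and "\<And>x. poly p x * poly f x = poly p x * poly g x"
  shows "poly f x = poly g x"
proof -
  have "poly (p * f) = poly (p * g)"
    using assms(2) by auto
  hence "p * f = p * g"
    by (simp only: poly_eq_poly_eq_iff)
  thus ?thesis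
    using assms(1) by simp
qed

lemma coprime_add_mult_self_left_nat: "coprime (k + j * m) m \<longleftrightarrow> coprime k (m::nat)"
  by (cases "m = 0") (simp, metis coprime_mod_left_iff mod_mult_self1)

lemma prime_coprime_right_iff_nat:
  assumes q: "prime (q::nat)"
  shows "coprime i q \<longleftrightarrow> \<not> q dvd i"
proof
  assume "coprime i q"
  thus "\<not> q dvd i"
    using q coprime_common_divisor[of i q q] not_prime_unit by auto
next
  assume "\<not> q dvd i"
  thus "coprime i q"
    using prime_imp_coprime[OF q] coprime_commute by blast
qed

lemma bij_betw_totatives_times_lessThan:
  assumes m: "m > 0"
  shows "bij_betw (\<lambda>(k, j). k + j * m) (totatives m \<times> {..<q}) {i\<in>{0<..m * q}. coprime i m}"
proof (rule bij_betwI[where g = "\<lambda>i. ((i - 1) mod m + 1, (i - 1) div m)"], goal_cases)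
  case 1
  have "k + j * m \<in> {i\<in>{0<..m * q}. coprime i m}" if "k \<in> totatives m" "j < q" for k j
  proof -
    have "Suc j * m \<le> q * m"
      using that(2) by (intro mult_le_mono1) simp
    thus ?thesis
      using that(1) by (auto simp: in_totatives_iff coprime_add_mult_self_left_nat mult.commute[of q])
  qed
  thus ?case by (auto simp: Pi_iff)
next
  case 2
  have "((i - 1) mod m + 1, (i - 1) div m) \<in> totatives m \<times> {..<q}"
    if "0 < i" "i \<le> m * q" "coprime i m" for i
  proof -
    have i_eq: "i = (i - 1) mod m + 1 + (i - 1) div m * m"
      using that(1) mod_div_mult_eq[of "i - 1" m] by linarith
    have "coprime ((i - 1) mod m + 1) m"
      using that(3) by (subst (asm) i_eq) (simp only: coprime_add_mult_self_left_nat)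
    moreover have "(i - 1) div m < q"
      using that m by (intro less_mult_imp_div_less) (simp add: mult.commute)
    ultimately show ?thesis
      using m by (simp add: in_totatives_iff Suc_le_eq)
  qed
  thus ?case by (auto simp: Pi_iff)
next
  case (3 x)
  then obtain k j where x: "x = (k, j)" "k \<in> totatives m"
    by blast
  have "k - 1 < m" and shift: "k + j * m - 1 = (k - 1) + j * m"
    using x(2) by (auto simp: in_totatives_iff)
  hence "(k + j * m - 1) mod m + 1 = k" "(k + j * m - 1) div m = j"
    using x(2) m unfolding shift mod_mult_self1 div_mult_self1[OF less_imp_neq[OF m, symmetric]]
    by (simp_all add: in_totatives_iff)
  thus ?case
    by (simp add: x)
next
  case (4 i)
  hence "0 < i" by simp
  thus ?case
    using mod_div_mult_eq[of "i - 1" m] by simp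
qed

lemma coprime_diff_totatives_mult_prime:
  fixes m q :: nat
  assumes q: "prime q"
  shows "{i\<in>{0<..m * q}. coprime i m} - totatives (m * q)
       = (if q dvd m then {} else (\<lambda>k. q * k) ` totatives m)"
proof -
  have mem: "i \<in> {i\<in>{0<..m * q}. coprime i m} - totatives (m * q) \<longleftrightarrow>
        0 < i \<and> i \<le> m * q \<and> coprime i m \<and> q dvd i" for i
    using prime_coprime_right_iff_nat[OF q] by (auto simp: in_totatives_iff)
  show ?thesis
  proof (cases "q dvd m")
    case True
    have "\<not> (coprime i m \<and> q dvd i)" for i
      using True q coprime_common_divisor[of i m q] not_prime_unit by blast
    hence "{i\<in>{0<..m * q}. coprime i m} - totatives (m * q) = {}"
      unfolding set_eq_iff mem by blast
    thus ?thesis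
      using True by simp
  next
    case False
    have "coprime q m"
      using False q prime_imp_coprime by blast
    have "0 < i \<and> i \<le> m * q \<and> coprime i m \<and> q dvd i \<longleftrightarrow> i \<in> (\<lambda>k. q * k) ` totatives m"
      for i
    proof
      assume i: "0 < i \<and> i \<le> m * q \<and> coprime i m \<and> q dvd i"
      then obtain k where k: "i = q * k"
        by (elim conjE dvdE)
      hence "k \<in> totatives m"
        using i by (simp add: in_totatives_iff mult.commute[of m])
      thus "i \<in> (\<lambda>k. q * k) ` totatives m"
        using k by blast
    next
      assume "i \<in> (\<lambda>k. q * k) ` totatives m"
      then obtain k where "i = q * k" "k \<in> totatives m"
        by blast
      thus "0 < i \<and> i \<le> m * q \<and> coprime i m \<and> q dvd i"
        using prime_gt_0_nat[OF q] \<open>coprime q m\<close> by (simp add: in_totatives_iff mult.commute[of m])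
    qed
    hence "{i\<in>{0<..m * q}. coprime i m} - totatives (m * q) = (\<lambda>k. q * k) ` totatives m"
      unfolding set_eq_iff mem by (rule allI)
    thus ?thesis
      using False by simp
  qed
qed

lemma bij_betw_minus_totatives:
  assumes "n > 1"
  shows "bij_betw (\<lambda>k. n - k) (totatives n) (totatives n)"
proof -
  have flip: "n - k \<in> totatives n \<and> n - (n - k) = k" if k: "k \<in> totatives n" for k
  proof -
    have "k < n"
      using totatives_less[OF k assms] .
    have "gcd (n - k) n = gcd k n"
      using \<open>k < n\<close> by (simp add: gcd_diff2_nat)
    hence "coprime (n - k) n"
      using k by (simp only: coprime_iff_gcd_eq_1 in_totatives_iff)
    thus ?thesis
      using \<open>k < n\<close> k by (simp add: in_totatives_iff)
  qed
  show ?thesis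
    by (rule bij_betw_byWitness[where f' = "\<lambda>k. n - k"]) (simp_all add: flip image_subset_iff)
qed

lemma bij_betw_mult_mod_totatives:
  assumes "coprime a n" "n > 1"
  shows "bij_betw (\<lambda>k. a * k mod n) (totatives n) (totatives n)"
proof -
  have inj: "inj_on (\<lambda>k. a * k mod n) (totatives n)"
  proof (rule inj_onI)
    fix x y assume "x \<in> totatives n" "y \<in> totatives n" "a * x mod n = a * y mod n"
    moreover from this have "[x = y] (mod n)"
      using cong_mult_lcancel_nat[OF assms(1)] by (simp add: cong_def)
    ultimately show "x = y"
      using assms(2) by (simp add: cong_def totatives_less)
  qed
  have "a * k mod n \<in> totatives n" if "k \<in> totatives n" for k
  proof -
    have "coprime (a * k) n"
      using that assms(1) by (simp add: in_totatives_iff)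
    hence "a * k mod n \<noteq> 0"
      using assms(2) coprime_common_divisor[of "a * k" n n] by (auto simp: mod_eq_0_iff_dvd)
    thus ?thesis
      using \<open>coprime (a * k) n\<close> assms(2) by (simp add: in_totatives_iff)
  qed
  hence "(\<lambda>k. a * k mod n) ` totatives n = totatives n"
    using inj by (intro endo_inj_surj) auto
  thus ?thesis
    using inj by (simp add: bij_betw_def)
qed

section \<open>Roots of unity\<close>

definition unity_root :: "nat \<Rightarrow> nat \<Rightarrow> complex" where
  "unity_root n k = cis (2 * pi * real k / real n)"

lemma unity_root_add: "unity_root n (j + k) = unity_root n j * unity_root n k"
  by (simp add: unity_root_def cis_mult add_divide_distrib distrib_left)

lemma unity_root_power: "unity_root n k ^ q = unity_root n (q * k)"
proof -
  have "real q * (2 * pi * real k / real n) = 2 * pi * real (q * k) / real n"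
    by simp
  thus ?thesis
    by (simp only: unity_root_def Complex.DeMoivre)
qed

lemma unity_root_mult_cancel: "q > 0 \<Longrightarrow> unity_root (m * q) (q * k) = unity_root m k"
  by (simp add: unity_root_def mult.assoc)

lemma unity_root_multiple: "n > 0 \<Longrightarrow> unity_root n (n * k) = 1"
  using cis_multiple_2pi[of "real k"] by (simp add: unity_root_def mult.assoc)

lemma unity_root_mod: "n > 0 \<Longrightarrow> unity_root n (k mod n) = unity_root n k"
proof -
  assume "n > 0"
  have "unity_root n k = unity_root n (k mod n + n * (k div n))"
    by simp
  thus ?thesis
    using \<open>n > 0\<close> by (simp only: unity_root_add unity_root_multiple mult_1_right)
qed

lemma power_diff_power_eq_prod_unity_roots:
  fixes z c :: complex
  assumes "q > 0"
  shows "z ^ q - c ^ q = (\<Prod>j<q. z - c * unity_root q j)"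
proof (cases "c = 0")
  case True
  thus ?thesis using assms by simp
next
  case False
  have "inj_on (unity_root q) {..<q}"
    using Complex.bij_betw_roots_unity[OF assms] by (simp add: bij_betw_def unity_root_def[abs_def])
  hence inj: "inj_on (\<lambda>j. c * unity_root q j) {..<q}"
    using False by (simp add: inj_on_def)
  define P where "P = Polynomial.monom 1 q - [:c ^ q:]"
  have coeffP: "Polynomial.coeff P q = 1"
    using assms by (cases q) (simp_all add: P_def coeff_pCons)
  have "degree P \<le> q"
    unfolding P_def by (intro degree_diff_le) (auto simp: degree_monom_le)
  hence degP: "degree P = q"
    using coeffP by (simp add: le_antisym le_degree)
  have "P = (\<Prod>j<q. [:- (c * unity_root q j), 1:])"
  proof (rule monic_poly_eq_prod_roots[OF degP _ inj])
    show "lead_coeff P = 1" using degP coeffP by simp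
    show "poly P (c * unity_root q j) = 0" for j
      using assms by (simp add: P_def poly_monom power_mult_distrib unity_root_power unity_root_multiple)
  qed
  from arg_cong[OF this, of "\<lambda>p. poly p z"] show ?thesis
    by (simp add: P_def poly_monom poly_prod)
qed

section \<open>Functional equations of cyclotomic polynomials\<close>

lemma poly_cyclotomic: "poly (cyclotomic n) z = (\<Prod>k\<in>totatives n. z - unity_root n k)"
proof -
  have "{k\<in>{1..n}. coprime k n} = totatives n"
    by (auto simp: totatives_def)
  thus ?thesis
    by (simp add: cyclotomic_def poly_prod unity_root_def)
qed

lemma cyclotomic_nonzero: "cyclotomic n \<noteq> 0"
  by (simp add: cyclotomic_def)

lemma poly_cyclotomic_1: "poly (cyclotomic 1) z = z - 1"
  by (simp add: poly_cyclotomic unity_root_def)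

text \<open>The q-th roots of the primitive m-th roots of unity are the mq-th roots of unity whose
  index is coprime to m. Those whose index is also coprime to q are the primitive mq-th roots;
  the remaining ones have index q k with k a totative of m, and there are none if q divides m.\<close>

lemma poly_cyclotomic_power_prime:
  assumes q: "prime q" and m: "m > 0"
  shows "poly (cyclotomic m) (z ^ q)
       = poly (cyclotomic (m * q)) z * (if q dvd m then 1 else poly (cyclotomic m) z)"
proof -
  define f where "f i = z - unity_root (m * q) i" for i
  define I where "I = {i\<in>{0<..m * q}. coprime i m}"
  have q0: "q > 0"
    using q prime_gt_0_nat by blast
  have factor: "z ^ q - unity_root m k = (\<Prod>j<q. f (k + j * m))" for k
  proof -
    have "unity_root m k = unity_root (m * q) k ^ q"
      using q0 by (simp add: unity_root_power unity_root_mult_cancel)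
    moreover have "unity_root (m * q) k * unity_root q j = unity_root (m * q) (k + j * m)" for j
      using m unity_root_mult_cancel[of m q j] by (simp add: unity_root_add mult.commute)
    ultimately show ?thesis
      using power_diff_power_eq_prod_unity_roots[OF q0, of z "unity_root (m * q) k"]
      by (simp add: f_def)
  qed
  have "poly (cyclotomic m) (z ^ q) = (\<Prod>k\<in>totatives m. \<Prod>j<q. f (k + j * m))"
    by (simp add: poly_cyclotomic factor)
  also have "\<dots> = (\<Prod>i\<in>I. f i)"
    unfolding prod.cartesian_product I_def
    using prod.reindex_bij_betw[OF bij_betw_totatives_times_lessThan[OF m], of f]
    by (simp add: split_def)
  also have "\<dots> = (\<Prod>i\<in>I - totatives (m * q). f i) * (\<Prod>i\<in>totatives (m * q). f i)"
    by (rule prod.subset_diff) (auto simp: I_def in_totatives_iff)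
  also have "(\<Prod>i\<in>totatives (m * q). f i) = poly (cyclotomic (m * q)) z"
    by (simp add: poly_cyclotomic f_def)
  also have "(\<Prod>i\<in>I - totatives (m * q). f i) = (if q dvd m then 1 else poly (cyclotomic m) z)"
  proof -
    have "inj_on (\<lambda>k. q * k) (totatives m)"
      using q0 by (simp add: inj_on_def)
    hence "(\<Prod>i\<in>(\<lambda>k. q * k) ` totatives m. f i) = poly (cyclotomic m) z"
      using q0 by (simp add: prod.reindex poly_cyclotomic f_def unity_root_mult_cancel)
    thus ?thesis
      unfolding I_def coprime_diff_totatives_mult_prime[OF q] by simp
  qed
  finally show ?thesis
    by (simp add: mult.commute)
qed

lemma poly_cyclotomic_prime:
  assumes p: "prime p"
  shows "poly (cyclotomic p) z = (\<Sum>j<p. z ^ j)"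
proof -
  define Q :: "complex poly" where "Q = (\<Sum>j<p. Polynomial.monom 1 j)"
  have "poly [:-1, 1:] x * poly (cyclotomic p) x = poly [:-1, 1:] x * poly Q x" for x
  proof -
    have "\<not> p dvd 1"
      using p not_prime_unit by metis
    hence "x ^ p - 1 = poly (cyclotomic p) x * (x - 1)"
      using poly_cyclotomic_power_prime[OF p, of 1 x] by (simp only: mult_1 if_False poly_cyclotomic_1)
    moreover have "x ^ p - 1 = (x - 1) * poly Q x"
      by (simp add: Q_def poly_sum poly_monom power_diff_1_eq)
    ultimately show ?thesis
      by (simp add: algebra_simps)
  qed
  hence "poly (cyclotomic p) z = poly Q z"
    by (intro poly_eq_if_mult_poly_eq[of "[:-1, 1:]"]) simp_all
  thus ?thesis
    by (simp add: Q_def poly_sum poly_monom)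
qed

lemma poly_cyclotomic_times_uminus:
  assumes m: "odd m" "m > 1"
  shows "poly (cyclotomic m) z * poly (cyclotomic m) (- z) = poly (cyclotomic m) (z ^ 2)"
proof -
  have "even (totient m)"
    using m by (intro totient_even) presburger
  have "poly (cyclotomic m) z * poly (cyclotomic m) (- z)
      = (\<Prod>k\<in>totatives m. (-1) * (z ^ 2 - unity_root m k ^ 2))"
    by (simp add: poly_cyclotomic prod.distrib[symmetric] power2_eq_square algebra_simps)
  also have "\<dots> = (-1) ^ totient m * (\<Prod>k\<in>totatives m. z ^ 2 - unity_root m k ^ 2)"
    by (simp only: prod.distrib prod_constant totient_def)
  also have "(-1) ^ totient m = (1 :: complex)"
    using \<open>even (totient m)\<close> by simp
  also have "(\<Prod>k\<in>totatives m. z ^ 2 - unity_root m k ^ 2)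
      = (\<Prod>k\<in>totatives m. z ^ 2 - unity_root m (2 * k mod m))"
    using m by (simp add: unity_root_power unity_root_mod)
  also have "\<dots> = (\<Prod>k\<in>totatives m. z ^ 2 - unity_root m k)"
    using prod.reindex_bij_betw[OF bij_betw_mult_mod_totatives[of 2 m], of "\<lambda>k. z ^ 2 - unity_root m k"] m
    by simp
  finally show ?thesis
    by (simp add: poly_cyclotomic)
qed

lemma poly_cyclotomic_double_odd:
  assumes m: "odd m" "m > 1"
  shows "poly (cyclotomic (2 * m)) z = poly (cyclotomic m) (- z)"
proof -
  have "poly (cyclotomic m) x * poly (cyclotomic (2 * m)) x
      = poly (cyclotomic m) x * poly (pcompose (cyclotomic m) [:0, -1:]) x" for x
  proof -
    have "poly (cyclotomic m) x * poly (cyclotomic (2 * m)) x = poly (cyclotomic m) (x ^ 2)"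
      using poly_cyclotomic_power_prime[of 2 m x] m by (simp add: mult.commute)
    also have "\<dots> = poly (cyclotomic m) x * poly (cyclotomic m) (- x)"
      by (rule poly_cyclotomic_times_uminus[OF m, symmetric])
    finally show ?thesis
      by (simp add: poly_pcompose)
  qed
  hence "poly (cyclotomic (2 * m)) z = poly (pcompose (cyclotomic m) [:0, -1:]) z"
    by (rule poly_eq_if_mult_poly_eq[OF cyclotomic_nonzero])
  thus ?thesis
    by (simp add: poly_pcompose)
qed

lemma cnj_poly_cyclotomic: "cnj (poly (cyclotomic n) z) = poly (cyclotomic n) (cnj z)"
proof (cases "n > 1")
  case True
  have cnj_root: "cnj (unity_root n k) = unity_root n (n - k)" if "k \<in> totatives n" for k
  proof -
    have "k \<le> n"
      using that by (rule totatives_le)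
    hence "2 * pi * real (n - k) / real n = - (2 * pi * real k / real n) + 2 * pi"
      using True by (simp add: of_nat_diff field_simps)
    thus ?thesis
      using cis_mult[of "- (2 * pi * real k / real n)" "2 * pi"]
      by (simp add: unity_root_def cis_cnj)
  qed
  have "cnj (poly (cyclotomic n) z) = (\<Prod>k\<in>totatives n. cnj z - unity_root n (n - k))"
    by (simp add: poly_cyclotomic cnj_prod cnj_root)
  also have "\<dots> = (\<Prod>k\<in>totatives n. cnj z - unity_root n k)"
    using prod.reindex_bij_betw[OF bij_betw_minus_totatives[OF True], of "\<lambda>k. cnj z - unity_root n k"] .
  finally show ?thesis
    by (simp add: poly_cyclotomic)
next
  case False
  hence "n = 0 \<or> n = 1" by auto
  thus ?thesis
    by (auto simp: poly_cyclotomic unity_root_def)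
qed

lemma poly_cyclotomic_reciprocal:
  assumes "z \<noteq> 0"
  shows "z ^ totient n * poly (cyclotomic n) (1 / z) = poly (cyclotomic n) 0 * poly (cyclotomic n) z"
proof -
  have unit: "unity_root n k * cnj (unity_root n k) = 1" for k
    by (simp add: unity_root_def cis_cnj cis_mult)
  have "z ^ totient n * poly (cyclotomic n) (1 / z) = (\<Prod>k\<in>totatives n. z * (1 / z - unity_root n k))"
    by (simp add: poly_cyclotomic prod.distrib totient_def)
  also have "\<dots> = (\<Prod>k\<in>totatives n. (- unity_root n k) * (z - cnj (unity_root n k)))"
    using assms unit by (intro prod.cong refl) (simp add: algebra_simps)
  also have "\<dots> = (\<Prod>k\<in>totatives n. - unity_root n k) * (\<Prod>k\<in>totatives n. z - cnj (unity_root n k))"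
    by (rule prod.distrib)
  also have "\<dots> = poly (cyclotomic n) 0 * cnj (poly (cyclotomic n) (cnj z))"
    by (simp add: poly_cyclotomic)
  finally show ?thesis
    by (simp add: cnj_poly_cyclotomic)
qed

lemma norm_poly_cyclotomic_0: "norm (poly (cyclotomic n) 0) = 1"
  by (simp add: poly_cyclotomic prod_norm[symmetric] unity_root_def)

definition cyc_eval :: "nat \<Rightarrow> real \<Rightarrow> real" where
  "cyc_eval n t = Re (poly (cyclotomic n) (complex_of_real t))"

lemma of_real_cyc_eval: "complex_of_real (cyc_eval n t) = poly (cyclotomic n) (complex_of_real t)"
proof -
  have "cnj (poly (cyclotomic n) (complex_of_real t)) = poly (cyclotomic n) (complex_of_real t)"
    by (simp add: cnj_poly_cyclotomic)
  hence "Im (poly (cyclotomic n) (complex_of_real t)) = 0"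
    by (metis complex_cnj_cancel_iff Reals_cnj_iff complex_is_Real_iff)
  thus ?thesis
    by (simp add: cyc_eval_def complex_eq_iff)
qed

lemma cyc_eval_power_prime:
  assumes "prime q" "m > 0"
  shows "cyc_eval m (t ^ q) = cyc_eval (m * q) t * (if q dvd m then 1 else cyc_eval m t)"
  using poly_cyclotomic_power_prime[OF assms, of "of_real t"]
  by (subst of_real_eq_iff[where 'a = complex, symmetric]) (simp add: of_real_cyc_eval)

lemma cyc_eval_prime: "prime p \<Longrightarrow> cyc_eval p t = (\<Sum>j<p. t ^ j)"
  using poly_cyclotomic_prime[of p "of_real t"]
  by (subst of_real_eq_iff[where 'a = complex, symmetric]) (simp add: of_real_cyc_eval)

lemma cyc_eval_2: "cyc_eval 2 t = 1 + t"
proof -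
  have "(\<Sum>j<2. t ^ j) = 1 + t"
    by (simp add: numeral_2_eq_2)
  thus ?thesis
    using cyc_eval_prime[of 2 t] by simp
qed

lemma cyc_eval_3: "cyc_eval 3 t = 1 + t + t ^ 2"
proof -
  have "(\<Sum>j<3. t ^ j) = 1 + t + t ^ 2"
    by (simp add: numeral_3_eq_3 power2_eq_square)
  thus ?thesis
    using cyc_eval_prime[of 3 t] by simp
qed

lemma cyc_eval_double_odd: "odd m \<Longrightarrow> m > 1 \<Longrightarrow> cyc_eval (2 * m) t = cyc_eval m (- t)"
  using poly_cyclotomic_double_odd[of m "of_real t"]
  by (subst of_real_eq_iff[where 'a = complex, symmetric]) (simp add: of_real_cyc_eval)

lemma cyc_eval_double_even: "even m \<Longrightarrow> m > 0 \<Longrightarrow> cyc_eval (2 * m) t = cyc_eval m (t ^ 2)"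
  using cyc_eval_power_prime[of 2 m t] by (simp add: mult.commute)

lemma cyc_eval_reciprocal:
  "t \<noteq> 0 \<Longrightarrow> t ^ totient n * cyc_eval n (1 / t) = cyc_eval n 0 * cyc_eval n t"
  using poly_cyclotomic_reciprocal[of "of_real t" n]
  by (subst of_real_eq_iff[where 'a = complex, symmetric]) (simp add: of_real_cyc_eval)

lemma abs_cyc_eval_0: "\<bar>cyc_eval n 0\<bar> = 1"
  using norm_poly_cyclotomic_0[of n] of_real_cyc_eval[of n 0] by (metis norm_of_real of_real_0)

lemma cyc_eval_prime_power:
  assumes p: "prime p" and a: "a > 0"
  shows "cyc_eval (p ^ a) t = cyc_eval p (t ^ p ^ (a - 1))"
proof -
  from a have "a \<ge> 1" by simp
  thus ?thesis
  proof (induction a arbitrary: t rule: nat_induct_at_least)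
    case base
    show ?case by simp
  next
    case (Suc a)
    have "cyc_eval (p ^ a) (t ^ p) = cyc_eval (p ^ Suc a) t"
      using cyc_eval_power_prime[OF p, of "p ^ a" t] Suc.hyps p
      by (simp add: prime_gt_0_nat mult.commute)
    moreover have "(t ^ p) ^ p ^ (a - 1) = t ^ p ^ (Suc a - 1)"
      using Suc.hyps by (simp add: power_mult[symmetric] power_Suc[symmetric] del: power_Suc)
    ultimately show ?case
      using Suc.IH[of "t ^ p"] by simp
  qed
qed

lemma geometric_sum_mem_nonneg:
  fixes t :: real
  assumes "0 \<le> t" "t \<le> 1" "n > 0"
  shows "(\<Sum>j<n. t ^ j) \<in> {1..real n}"
proof -
  have "t ^ 0 \<le> (\<Sum>j<n. t ^ j)"
    using assms by (intro member_le_sum) auto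
  moreover have "(\<Sum>j<n. t ^ j) \<le> (\<Sum>j<n. 1)"
    using assms by (intro sum_mono power_le_one) auto
  ultimately show ?thesis
    by simp
qed

lemma geometric_sum_mem_nonpos:
  fixes t :: real
  assumes "-1 \<le> t" "t \<le> 0" "odd n"
  shows "(\<Sum>j<n. t ^ j) \<in> {1/2..1}"
proof -
  define s where "s = - t"
  have s: "0 \<le> s" "s \<le> 1"
    using assms by (auto simp: s_def)
  have "t ^ n = - (s ^ n)"
    using assms(3) by (simp add: s_def)
  hence eq: "(\<Sum>j<n. t ^ j) * (1 + s) = 1 + s ^ n"
    using power_diff_1_eq[of t n] by (simp add: s_def algebra_simps)
  have "s ^ n \<le> s"
    using s assms(3) by (metis odd_pos power_decreasing power_one_right Suc_leI One_nat_def)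
  hence "(\<Sum>j<n. t ^ j) * (1 + s) \<le> 1 * (1 + s)"
    unfolding eq by simp
  moreover have "(1/2) * (1 + s) \<le> (\<Sum>j<n. t ^ j) * (1 + s)"
  proof -
    have "(1/2) * (1 + s) \<le> 1"
      using s by simp
    thus ?thesis
      unfolding eq using s by (simp add: add_increasing2)
  qed
  ultimately show ?thesis
    using s by (auto dest: mult_right_le_imp_le)
qed

lemma divide_mem_interval:
  fixes x y L U :: real
  assumes "0 < L" "x \<in> {L..U}" "y \<in> {L..U}"
  shows "x / y \<in> {L / U..U / L}"
  using assms by (auto intro: frac_le)

lemma reciprocal_interval_mono:
  fixes c d :: real
  assumes "0 < d" "d \<le> c"
  shows "{c..1/c} \<subseteq> {d..1/d}"
  using assms by (auto simp: divide_simps order_trans)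

lemma sqrt3_half_pos: "0 < sqrt 3 / 2"
  and sqrt3_half_le_1: "sqrt 3 / 2 \<le> 1"
  and sqrt3_half_square: "(sqrt 3 / 2) ^ 2 = 3 / 4"
proof -
  show "0 < sqrt 3 / 2" by simp
  show "(sqrt 3 / 2) ^ 2 = 3 / 4" by (simp add: power_divide)
  hence "(sqrt 3 / 2) ^ 2 \<le> 1 ^ 2" by simp
  thus "sqrt 3 / 2 \<le> 1" by (rule power2_le_imp_le) simp
qed

lemma sqrt3_half_power_antimono: "k \<le> l \<Longrightarrow> (sqrt 3 / 2) ^ l \<le> (sqrt 3 / 2) ^ k"
  using sqrt3_half_pos sqrt3_half_le_1 by (intro power_decreasing) auto

lemma real_le_power_16_9:
  assumes "n \<ge> 3"
  shows "real n \<le> (16/9) ^ (n - 1)"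
  using assms
proof (induction n rule: nat_induct_at_least)
  case base
  show ?case by (simp add: power2_eq_square)
next
  case (Suc n)
  have "real (Suc n) \<le> 16/9 * real n"
    using Suc.hyps by simp
  also have "\<dots> \<le> 16/9 * (16/9) ^ (n - 1)"
    using Suc.IH by simp
  also have "\<dots> = (16/9) ^ (Suc n - 1)"
    using Suc.hyps by (cases n) simp_all
  finally show ?case .
qed

lemma sqrt3_half_power_le_inverse:
  assumes "n \<ge> 3" "4 * (n - 1) \<le> k"
  shows "(sqrt 3 / 2) ^ k \<le> 1 / real n"
proof -
  have "(sqrt 3 / 2) ^ k \<le> (sqrt 3 / 2) ^ (4 * (n - 1))"
    using assms(2) by (rule sqrt3_half_power_antimono)
  also have "\<dots> = ((sqrt 3 / 2) ^ 2) ^ (2 * (n - 1))"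
    by (simp flip: power_mult)
  also have "\<dots> = 1 / (16/9) ^ (n - 1)"
    by (simp add: sqrt3_half_square power_mult power_one_over[symmetric] power2_eq_square)
  also have "\<dots> \<le> 1 / real n"
    using real_le_power_16_9[OF assms(1)] assms(1) by (intro divide_left_mono) auto
  finally show ?thesis .
qed

lemma sqrt3_half_power_interval_mono:
  "k \<le> l \<Longrightarrow> {(sqrt 3 / 2) ^ k..1 / (sqrt 3 / 2) ^ k} \<subseteq> {(sqrt 3 / 2) ^ l..1 / (sqrt 3 / 2) ^ l}"
  using sqrt3_half_pos by (intro reciprocal_interval_mono sqrt3_half_power_antimono) auto

lemma greatest_prime_factor:
  fixes n :: nat
  assumes "n > 1"
  obtains q where "prime q" "q dvd n" "\<And>p. prime p \<Longrightarrow> p dvd n \<Longrightarrow> p \<le> q"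
proof -
  obtain p where "prime p" "p dvd n"
    using prime_factor_nat[of n] assms by auto
  hence "p \<in> prime_factors n"
    using assms by (simp add: in_prime_factors_iff)
  hence "prime_factors n \<noteq> {}"
    by blast
  hence "Max (prime_factors n) \<in> prime_factors n"
    by (intro Max_in) auto
  moreover have "p \<le> Max (prime_factors n)" if "prime p" "p dvd n" for p
    using that assms by (intro Max_ge) (auto simp: in_prime_factors_iff)
  ultimately show ?thesis
    using that assms by (auto simp: in_prime_factors_iff)
qed

lemma totient_odd_prime_power_cases:
  assumes p: "prime p" "odd p" and a: "a > 0"
  shows "p ^ a = 3 \<or> p ^ a = 5 \<or> 6 \<le> totient (p ^ a)"
proof -
  have p3: "3 \<le> p"
    using prime_ge_2_nat[OF p(1)] p(2) by (cases "p = 2") auto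
  have "6 \<le> p ^ (a - 1) * (p - 1)" if "p ^ a \<noteq> 3" "p ^ a \<noteq> 5"
  proof (cases "a = 1")
    case True
    hence "p \<noteq> 3" "p \<noteq> 4" "p \<noteq> 5" "p \<noteq> 6"
      using that p(2) by auto
    thus ?thesis
      using True p3 by simp
  next
    case False
    hence "p ^ 1 \<le> p ^ (a - 1)"
      using a p3 by (intro power_increasing) auto
    hence "3 * 2 \<le> p ^ (a - 1) * (p - 1)"
      using p3 by (intro mult_le_mono) auto
    thus ?thesis
      by simp
  qed
  thus ?thesis
    using p(1) a by (auto simp: totient_prime_power)
qed

section \<open>Bounds on the unit interval\<close>

lemma cyc_eval_odd_prime_power_mem:
  assumes p: "prime p" "odd p" and a: "a > 0"
  shows "0 \<le> t \<Longrightarrow> t \<le> 1 \<Longrightarrow> cyc_eval (p ^ a) t \<in> {1..real p}"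
    and "-1 \<le> t \<Longrightarrow> t \<le> 0 \<Longrightarrow> cyc_eval (p ^ a) t \<in> {1/2..1}"
proof -
  define s where "s = t ^ p ^ (a - 1)"
  have eval: "cyc_eval (p ^ a) t = (\<Sum>j<p. s ^ j)"
    unfolding s_def cyc_eval_prime_power[OF p(1) a] cyc_eval_prime[OF p(1)] ..
  have odd_exp: "odd (p ^ (a - 1))"
    using p(2) by simp
  show "cyc_eval (p ^ a) t \<in> {1..real p}" if "0 \<le> t" "t \<le> 1"
    unfolding eval s_def using that prime_gt_0_nat[OF p(1)]
    by (intro geometric_sum_mem_nonneg) (auto intro: power_le_one)
  show "cyc_eval (p ^ a) t \<in> {1/2..1}" if "-1 \<le> t" "t \<le> 0"
  proof -
    have "\<bar>s\<bar> \<le> 1"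
      unfolding s_def using that by (simp add: power_abs power_le_one)
    moreover have "s \<le> 0"
      unfolding s_def using that odd_exp prime_gt_0_nat[OF p(1)] by (simp add: power_le_zero_eq)
    ultimately show ?thesis
      unfolding eval using p(2) by (intro geometric_sum_mem_nonpos) auto
  qed
qed

lemma cyc_eval_odd_prime_power_ratio:
  assumes p: "prime p" "odd p" and a: "a > 0" and k: "odd k" and t: "\<bar>t\<bar> \<le> 1"
  shows "cyc_eval (p ^ a) (t ^ k) / cyc_eval (p ^ a) t \<in> {1 / real p..real p}"
proof (cases "0 \<le> t")
  case True
  have "0 \<le> t ^ k" "t ^ k \<le> 1"
    using True t by (auto intro: power_le_one)
  thus ?thesis
    using True t divide_mem_interval[of 1 _ "real p"]
      cyc_eval_odd_prime_power_mem(1)[OF p a] by auto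
next
  case False
  have "\<bar>t ^ k\<bar> \<le> 1"
    using t by (simp add: power_abs power_le_one)
  moreover have "t ^ k \<le> 0"
    using False k by (simp add: power_le_zero_eq odd_pos)
  ultimately have "-1 \<le> t ^ k" "t ^ k \<le> 0"
    by (simp_all add: abs_le_iff)
  hence "cyc_eval (p ^ a) (t ^ k) \<in> {1/2..1}"
    by (rule cyc_eval_odd_prime_power_mem(2)[OF p a])
  moreover have "cyc_eval (p ^ a) t \<in> {1/2..1}"
    using False t by (intro cyc_eval_odd_prime_power_mem(2)[OF p a]) auto
  ultimately have "cyc_eval (p ^ a) (t ^ k) / cyc_eval (p ^ a) t \<in> {(1/2) / 1..1 / (1/2)}"
    by (intro divide_mem_interval) simp_all
  moreover have "3 \<le> p"
    using prime_ge_2_nat[OF p(1)] p(2) by (cases "p = 2") auto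
  hence "{(1/2) / 1..1 / (1/2)} \<subseteq> {1 / real p..real p}"
    by (simp add: field_simps)
  ultimately show ?thesis
    by (rule rev_subsetD)
qed

lemma cyc_eval_mem_prime_power_times_prime:
  assumes p: "prime p" "odd p" and q: "prime q" "p < q" and a: "a > 0" and t: "\<bar>t\<bar> \<le> 1"
  shows "cyc_eval (p ^ a * q) t
           \<in> {(sqrt 3 / 2) ^ totient (p ^ a * q)..1 / (sqrt 3 / 2) ^ totient (p ^ a * q)}"
proof -
  have p3: "3 \<le> p"
    using prime_ge_2_nat[OF p(1)] p(2) by (cases "p = 2") auto
  have "odd q"
    using q p3 by (intro prime_odd_nat) auto
  hence q_ge: "p + 2 \<le> q"
    using p(2) q(2) by presburger
  have "\<not> q dvd p ^ a"
    using p(1) q by (metis prime_dvd_power primes_dvd_imp_eq less_irrefl)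
  hence "cyc_eval (p ^ a) (t ^ q) = cyc_eval (p ^ a * q) t * cyc_eval (p ^ a) t"
    using cyc_eval_power_prime[OF q(1), of "p ^ a" t] prime_gt_0_nat[OF p(1)] by simp
  moreover have "cyc_eval (p ^ a) t \<noteq> 0"
  proof -
    have "1/2 \<le> cyc_eval (p ^ a) t"
      using cyc_eval_odd_prime_power_mem[OF p a, of t] t by (cases "0 \<le> t") auto
    thus ?thesis
      by auto
  qed
  ultimately have "cyc_eval (p ^ a * q) t \<in> {1 / real p..real p}"
    using cyc_eval_odd_prime_power_ratio[OF p a \<open>odd q\<close> t] by simp
  moreover have "{1 / real p..real p} \<subseteq> {(sqrt 3 / 2) ^ totient (p ^ a * q)..1 / (sqrt 3 / 2) ^ totient (p ^ a * q)}"
  proof -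
    have "coprime (p ^ a) q"
      using prime_imp_coprime[OF q(1) \<open>\<not> q dvd p ^ a\<close>] by (rule coprime_commute[THEN iffD1])
    hence "totient (p ^ a * q) = p ^ (a - 1) * (p - 1) * (q - 1)"
      using p(1) q(1) a by (simp add: totient_mult_coprime totient_prime_power totient_prime)
    moreover have "1 * (p - 1) * 4 \<le> p ^ (a - 1) * (p - 1) * (q - 1)"
      using q_ge p3 prime_gt_0_nat[OF p(1)] by (intro mult_le_mono) auto
    ultimately have "(sqrt 3 / 2) ^ totient (p ^ a * q) \<le> 1 / real p"
      using p3 by (intro sqrt3_half_power_le_inverse) auto
    hence "{1 / real p..1 / (1 / real p)}
        \<subseteq> {(sqrt 3 / 2) ^ totient (p ^ a * q)..1 / (sqrt 3 / 2) ^ totient (p ^ a * q)}"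
      by (intro reciprocal_interval_mono) (use sqrt3_half_pos in simp_all)
    thus ?thesis
      by simp
  qed
  ultimately show ?thesis
    by (rule rev_subsetD)
qed

lemma cyc_eval_mem_mult_prime:
  assumes q: "prime q" "q \<ge> 3" and m: "m > 1" and t: "\<bar>t\<bar> \<le> 1"
    and bounds: "\<And>s. \<bar>s\<bar> \<le> 1 \<Longrightarrow> cyc_eval m s \<in> {(sqrt 3 / 2) ^ totient m..1 / (sqrt 3 / 2) ^ totient m}"
  shows "cyc_eval (m * q) t \<in> {(sqrt 3 / 2) ^ totient (m * q)..1 / (sqrt 3 / 2) ^ totient (m * q)}"
proof -
  define c where "c = (sqrt 3 / 2) ^ totient m"
  have "c > 0"
    using sqrt3_half_pos by (simp add: c_def)
  have tq: "\<bar>t ^ q\<bar> \<le> 1"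
    using t by (simp add: power_abs power_le_one)
  have reduce: "cyc_eval m (t ^ q) = cyc_eval (m * q) t * (if q dvd m then 1 else cyc_eval m t)"
    using cyc_eval_power_prime[OF q(1), of m t] m by simp
  show ?thesis
  proof (cases "q dvd m")
    case True
    have "totient m \<le> totient (m * q)"
      using m q(2) by (intro totient_dvd_mono) auto
    moreover have "cyc_eval (m * q) t \<in> {c..1/c}"
      using bounds[OF tq] reduce True by (simp add: c_def)
    ultimately show ?thesis
      unfolding c_def by (metis rev_subsetD sqrt3_half_power_interval_mono)
  next
    case False
    have "c \<le> cyc_eval m t"
      using bounds[OF t] by (simp add: c_def)
    hence "cyc_eval m t \<noteq> 0"
      using \<open>c > 0\<close> by simp
    hence "cyc_eval (m * q) t = cyc_eval m (t ^ q) / cyc_eval m t"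
      using reduce False by simp
    also have "\<dots> \<in> {c / (1/c)..(1/c) / c}"
      using bounds[OF tq] bounds[OF t] \<open>c > 0\<close> unfolding c_def by (intro divide_mem_interval)
    also have "{c / (1/c)..(1/c) / c} = {(sqrt 3 / 2) ^ (2 * totient m)..1 / (sqrt 3 / 2) ^ (2 * totient m)}"
      by (simp add: c_def power_mult power2_eq_square mult.commute)
    also have "\<dots> \<subseteq> {(sqrt 3 / 2) ^ totient (m * q)..1 / (sqrt 3 / 2) ^ totient (m * q)}"
    proof (rule sqrt3_half_power_interval_mono)
      have "coprime m q"
        using prime_imp_coprime[OF q(1) False] by (rule coprime_commute[THEN iffD1])
      hence "totient (m * q) = totient m * (q - 1)"
        using q(1) by (simp add: totient_mult_coprime totient_prime)
      moreover have "totient m * 2 \<le> totient m * (q - 1)"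
        using q(2) by (intro mult_le_mono2) simp
      ultimately show "2 * totient m \<le> totient (m * q)"
        by (simp add: mult.commute)
    qed
    finally show ?thesis .
  qed
qed

text \<open>Splitting off the largest prime factor q of n guarantees p < q when n / q = p^a.\<close>

lemma cyc_eval_mem_odd_non_prime_power:
  assumes "odd n" "n > 1" "\<not> primepow n" "\<bar>t\<bar> \<le> 1"
  shows "cyc_eval n t \<in> {(sqrt 3 / 2) ^ totient n..1 / (sqrt 3 / 2) ^ totient n}"
  using assms
proof (induction n arbitrary: t rule: less_induct)
  case (less n)
  obtain q where q: "prime q" "q dvd n" and q_max: "\<And>p. prime p \<Longrightarrow> p dvd n \<Longrightarrow> p \<le> q"
    using greatest_prime_factor[OF less.prems(2)] by blast
  define m where "m = n div q"
  have n_eq: "n = m * q"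
    using q(2) by (simp add: m_def)
  have "odd m" "odd q"
    using less.prems(1) n_eq by auto
  have "m \<noteq> 1"
    using less.prems(3) q(1) n_eq by auto
  hence "m > 1"
    using \<open>odd m\<close> by (cases m) auto
  have "q \<ge> 3"
    using prime_ge_2_nat[OF q(1)] \<open>odd q\<close> by (cases "q = 2") auto
  show ?case
  proof (cases "primepow m")
    case True
    then obtain p a where p: "prime p" "a > 0" "m = p ^ a"
      by (auto simp: primepow_def)
    have "p dvd n"
      using p n_eq by (simp add: dvd_mult2)
    hence "odd p" "p \<le> q"
      using less.prems(1) q_max[OF p(1)] by (auto elim: dvd_trans[rotated] evenE)
    moreover have "p \<noteq> q"
      using less.prems(3) p n_eq by (metis power_Suc2 primepow_prime_power zero_less_Suc)
    ultimately show ?thesis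
      using cyc_eval_mem_prime_power_times_prime[OF p(1) \<open>odd p\<close> q(1) _ p(2) less.prems(4)] p(3) n_eq
      by simp
  next
    case False
    have "m < n"
      using n_eq \<open>m > 1\<close> \<open>q \<ge> 3\<close> by simp
    thus ?thesis
      using cyc_eval_mem_mult_prime[OF q(1) \<open>q \<ge> 3\<close> \<open>m > 1\<close> less.prems(4)] less.IH \<open>odd m\<close> \<open>m > 1\<close> False n_eq
      by simp
  qed
qed

lemma cyc_eval_3_lower_bound: "3/4 \<le> cyc_eval 3 t"
proof -
  have "cyc_eval 3 t = 3/4 + (t + 1/2) ^ 2"
    by (simp add: cyc_eval_3 power2_eq_square algebra_simps)
  thus ?thesis
    by simp
qed

lemma cyc_eval_5_lower_bound: "9/16 \<le> cyc_eval 5 t"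
proof -
  have "(\<Sum>j<5. t ^ j) = 1 + t + t ^ 2 + t ^ 3 + t ^ 4"
    by (simp add: eval_nat_numeral)
  hence "cyc_eval 5 t = 1 + t + t ^ 2 + t ^ 3 + t ^ 4"
    using cyc_eval_prime[of 5 t] by simp
  hence "12 * cyc_eval 5 t = 8 + 3 * (2 * t ^ 2 + t) ^ 2 + (3 * t + 2) ^ 2"
    by (simp add: eval_nat_numeral algebra_simps)
  moreover have "0 \<le> (2 * t ^ 2 + t) ^ 2" "0 \<le> (3 * t + 2) ^ 2"
    by simp_all
  ultimately show ?thesis
    by linarith
qed

lemma cyc_eval_lower_bound_odd_prime_power:
  assumes p: "prime p" "odd p" "a > 0" and t: "\<bar>t\<bar> \<le> 1"
  shows "(sqrt 3 / 2) ^ totient (p ^ a) \<le> cyc_eval (p ^ a) t"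
proof -
  consider "p ^ a = 3" | "p ^ a = 5" | "6 \<le> totient (p ^ a)"
    using totient_odd_prime_power_cases[OF p] by blast
  thus ?thesis
  proof cases
    case 1
    thus ?thesis
      using cyc_eval_3_lower_bound[of t] sqrt3_half_square by (simp add: totient_prime)
  next
    case 2
    have "(sqrt 3 / 2) ^ 4 = ((sqrt 3 / 2) ^ 2) ^ 2"
      by (simp flip: power_mult)
    thus ?thesis
      using 2 cyc_eval_5_lower_bound[of t] sqrt3_half_square by (simp add: totient_prime power2_eq_square)
  next
    case 3
    have "(sqrt 3 / 2) ^ totient (p ^ a) \<le> (sqrt 3 / 2) ^ (2 * 3)"
      using 3 by (intro sqrt3_half_power_antimono) simp
    also have "\<dots> = (3/4) ^ 3"
      by (simp only: power_mult sqrt3_half_square)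
    also have "\<dots> \<le> 1/2"
      by (simp add: eval_nat_numeral)
    also have "1/2 \<le> cyc_eval (p ^ a) t"
      using cyc_eval_odd_prime_power_mem[OF p, of t] t by (cases "0 \<le> t") auto
    finally show ?thesis .
  qed
qed

lemma cyc_eval_lower_bound_odd:
  assumes "odd n" "n > 1" "\<bar>t\<bar> \<le> 1"
  shows "(sqrt 3 / 2) ^ totient n \<le> cyc_eval n t"
proof (cases "primepow n")
  case True
  then obtain p a where p: "prime p" "a > 0" "n = p ^ a"
    by (auto simp: primepow_def)
  moreover have "odd p"
    using assms(1) p by simp
  ultimately show ?thesis
    using cyc_eval_lower_bound_odd_prime_power assms(3) by blast
next
  case False
  thus ?thesis
    using cyc_eval_mem_odd_non_prime_power[OF assms(1,2) False assms(3)] by simp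
qed

lemma cyc_eval_lower_bound_unit_interval:
  assumes "n \<ge> 3" "\<bar>t\<bar> \<le> 1"
  shows "(sqrt 3 / 2) ^ totient n \<le> cyc_eval n t"
  using assms
proof (induction n arbitrary: t rule: less_induct)
  case (less n)
  show ?case
  proof (cases "odd n")
    case True
    thus ?thesis
      using cyc_eval_lower_bound_odd less.prems by simp
  next
    case False
    then obtain m where n: "n = 2 * m"
      by blast
    have "m \<ge> 2"
      using less.prems(1) n by simp
    consider "odd m" | "m = 2" | "even m" "m \<ge> 3"
      using \<open>m \<ge> 2\<close> by (cases "m = 2") auto
    thus ?thesis
    proof cases
      case 1
      thus ?thesis
        using cyc_eval_lower_bound_odd[OF 1, of "- t"] cyc_eval_double_odd[OF 1] n \<open>m \<ge> 2\<close> less.prems(2)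
        by (simp add: totient_double)
    next
      case 2
      have "(sqrt 3 / 2) ^ totient n \<le> 1"
        using sqrt3_half_pos sqrt3_half_le_1 by (simp add: power_le_one)
      also have "1 \<le> cyc_eval 2 (t ^ 2)"
        by (simp add: cyc_eval_2)
      finally show ?thesis
        using cyc_eval_double_even[of 2 t] n 2 by simp
    next
      case 3
      have "(sqrt 3 / 2) ^ totient n \<le> (sqrt 3 / 2) ^ totient m"
        using n 3 by (intro sqrt3_half_power_antimono) (simp add: totient_double)
      also have "\<dots> \<le> cyc_eval m (t ^ 2)"
        using less.IH[of m "t ^ 2"] n 3 less.prems(2) by (simp add: abs_square_le_1)
      finally show ?thesis
        using cyc_eval_double_even[of m t] n 3 by simp
    qed
  qed
qed

lemma cyc_eval_lower_bound:
  assumes n: "n \<ge> 3"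
  shows "(sqrt 3 / 2) ^ totient n \<le> cyc_eval n t"
proof (cases "\<bar>t\<bar> \<le> 1")
  case True
  thus ?thesis
    using cyc_eval_lower_bound_unit_interval[OF n] by simp
next
  case False
  hence "t \<noteq> 0" "\<bar>1 / t\<bar> \<le> 1"
    by (auto simp: abs_divide divide_le_eq_1)
  have "0 < (sqrt 3 / 2) ^ totient n"
    using sqrt3_half_pos by simp
  also have "\<dots> \<le> cyc_eval n 0"
    using cyc_eval_lower_bound_unit_interval[OF n, of 0] by simp
  finally have "0 < cyc_eval n 0" .
  hence "cyc_eval n 0 = 1"
    using abs_cyc_eval_0[of n] by simp
  hence eval: "cyc_eval n t = t ^ totient n * cyc_eval n (1 / t)"
    using cyc_eval_reciprocal[OF \<open>t \<noteq> 0\<close>, of n] by simp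
  have lower: "(sqrt 3 / 2) ^ totient n \<le> cyc_eval n (1 / t)"
    using cyc_eval_lower_bound_unit_interval[OF n \<open>\<bar>1 / t\<bar> \<le> 1\<close>] .
  have "even (totient n)"
    using n by (intro totient_even) simp
  moreover have "1 \<le> \<bar>t\<bar> ^ totient n"
    using False by (simp add: one_le_power)
  ultimately have "1 \<le> t ^ totient n"
    by (simp add: power_even_abs)
  moreover have "0 \<le> cyc_eval n (1 / t)"
    by (rule order_trans[OF _ lower]) (use sqrt3_half_pos in simp)
  ultimately have "1 * cyc_eval n (1 / t) \<le> t ^ totient n * cyc_eval n (1 / t)"
    by (rule mult_right_mono)
  thus ?thesis
    using lower eval by simp
qed

lemma cyc_inf_lower_bound:
  assumes "n \<ge> 3"
  shows "(sqrt 3 / 2) ^ totient n \<le> cyc_inf n"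
  unfolding cyc_inf_def cyc_eval_def[symmetric]
  by (rule cINF_greatest) (use cyc_eval_lower_bound[OF assms] in auto)

lemma cyc_inf_eq_if_attained:
  assumes "n \<ge> 3" and "cyc_eval n t = (sqrt 3 / 2) ^ totient n"
  shows "cyc_inf n = (sqrt 3 / 2) ^ totient n"
proof (rule antisym)
  have "bdd_below (range (cyc_eval n))"
    using cyc_eval_lower_bound[OF assms(1)] by (intro bdd_belowI2)
  hence "cyc_inf n \<le> cyc_eval n t"
    unfolding cyc_inf_def cyc_eval_def[symmetric] by (rule cINF_lower) simp
  thus "cyc_inf n \<le> (sqrt 3 / 2) ^ totient n"
    using assms(2) by simp
qed (rule cyc_inf_lower_bound[OF assms(1)])

theorem proposition4p3:
  shows "(\<forall>n::nat. n \<ge> 3 \<longrightarrow> cyc_inf n \<ge> (sqrt 3 / 2) ^ totient n)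
         \<and> cyc_inf 3 = (sqrt 3 / 2) ^ totient 3
         \<and> cyc_inf 6 = (sqrt 3 / 2) ^ totient 6"
proof (intro conjI allI impI)
  show "(sqrt 3 / 2) ^ totient n \<le> cyc_inf n" if "n \<ge> 3" for n
    using that by (rule cyc_inf_lower_bound)
  have value_3: "cyc_eval 3 (- (1/2)) = (sqrt 3 / 2) ^ 2"
    by (simp add: cyc_eval_3 sqrt3_half_square power2_eq_square)
  show "cyc_inf 3 = (sqrt 3 / 2) ^ totient 3"
    using value_3 by (intro cyc_inf_eq_if_attained) (simp_all add: totient_prime)
  have "cyc_eval (2 * 3) (1/2) = cyc_eval 3 (- (1/2))"
    by (rule cyc_eval_double_odd) simp_all
  thus "cyc_inf 6 = (sqrt 3 / 2) ^ totient 6"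
    using value_3 by (intro cyc_inf_eq_if_attained) simp_all
qed

end
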